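(* Let $s\le L$ be positive integers, $\mathbf{D}\in\mathbb{R}^{N\times N}$, $\mathbf{H}\in\mathbb{R}^{N\times L}$, $\mathbf{A}\in\mathbb{R}^{m\times N}$ with $m<N$, and consider the system $\mathbf{x}_k=\mathbf{D}\mathbf{x}_{k-1}+\mathbf{H}\mathbf{h}_k$, $\mathbf{y}_k=\mathbf{A}\mathbf{x}_k$, with inputs satisfying $\|\mathbf{h}_k\|_0\le s$. If the system is output $s$-sparse-controllable, then $s\ge m-\operatorname{rank}(\mathbf{A}\mathbf{D})$ and, for all $\lambda\in\mathbb{C}$, the matrix $\mathbf{A}\begin{bmatrix}\lambda\mathbf{I}-\mathbf{D} & \mathbf{H}\end{bmatrix}\in\mathbb{C}^{m\times(N+L)}$ has rank $m$.
   Context: $\|\cdot\|_0$ denotes the number of nonzero entries. The system is output $s$-sparse-controllable if for every initial state $\mathbf{x}_0\in\mathbb{R}^N$ and every desired output $\mathbf{y}\in\mathbb{R}^m$ there exist a finite $K$ and inputs $\mathbf{h}_1,\dots,\mathbf{h}_K\in\mathbb{R}^L$ with $\|\mathbf{h}_k\|_0\le s$ for all $k$ such that $\mathbf{y}_K=\mathbf{A}\mathbf{x}_K=\mathbf{y}$. *)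

theory Defs
  imports "HOL-Analysis.Analysis"
begin

definition l0norm :: "real^'l \<Rightarrow> nat" where
  "l0norm h = card {i. h $ i \<noteq> 0}"

primrec state :: "real^'n^'n \<Rightarrow> real^'l^'n \<Rightarrow> real^'n \<Rightarrow> (nat \<Rightarrow> real^'l) \<Rightarrow> nat \<Rightarrow> real^'n" where
  "state D H x0 hs 0 = x0"
| "state D H x0 hs (Suc k) = D *v state D H x0 hs k + H *v hs (Suc k)"

definition output_sparse_controllable ::
  "real^'n^'n \<Rightarrow> real^'l^'n \<Rightarrow> real^'n^'m \<Rightarrow> nat \<Rightarrow> bool" where
  "output_sparse_controllable D H A s \<longleftrightarrow>
     (\<forall>x0 y. \<exists>K hs. (\<forall>k\<in>{1..K}. l0norm (hs k) \<le> s) \<and> A *v state D H x0 hs K = y)"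

definition cmat :: "real^'c^'r \<Rightarrow> complex^'c^'r" where
  "cmat M = (\<chi> i j. complex_of_real (M $ i $ j))"

definition pbh_block :: "complex \<Rightarrow> real^'n^'n \<Rightarrow> real^'l^'n \<Rightarrow> complex^('n + 'l)^'n" where
  "pbh_block z D H = (\<chi> i j. case j of
       Inl c \<Rightarrow> (mat z - cmat D) $ i $ c
     | Inr c \<Rightarrow> cmat H $ i $ c)"

end

theory Submission
  imports Defs
begin

(* Both conditions are read off the outputs reachable from x0 = 0.
   An output reached after a last step is A D x + A H h with h supported on at most s
   coordinates, so all reachable outputs lie in finitely many subspaces of dimension at most
   rank (A D) + s. Subspaces of dimension below m are negligible in R^m, so they cover R^m only
   if rank (A D) + s >= m.
   If a complex row vector w satisfies w A [z I - D, H] = 0, then u = w A is a left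
   eigenvector of D for z with u H = 0, so u x_k = 0 along every trajectory from 0.
   Hence w annihilates every reachable output, i.e. all of R^m, which forces w = 0. *)

definition supported_in :: "'l set \<Rightarrow> ('a::zero^'l) set" where
  "supported_in S = {h. \<forall>i. i \<notin> S \<longrightarrow> h $ i = 0}"

lemma dim_supported_in: "dim (supported_in S :: (real^'l) set) = card S"
  unfolding supported_in_def using dim_substandard_cart[of S, where 'a=real] by (simp add: dim_vec_eq)

lemma dim_set_plus_le:
  fixes S T :: "'a::euclidean_space set"
  shows "dim (S + T) \<le> dim S + dim T"
proof -
  have "S + T \<subseteq> {x + y |x y. x \<in> span S \<and> y \<in> span T}"
    by (auto simp: set_plus_def intro: span_base)
  then have "dim (S + T) \<le> dim {x + y |x y. x \<in> span S \<and> y \<in> span T}"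
    by (rule dim_subset)
  also have "\<dots> \<le> dim (span S) + dim (span T)"
    using dim_sums_Int[OF subspace_span subspace_span, of S T] by linarith
  finally show ?thesis by simp
qed

lemma dim_range_plus_supported_le:
  fixes P :: "real^'n^'m" and Q :: "real^'l^'m"
  shows "dim (range ((*v) P) + (*v) Q ` supported_in S) \<le> rank P + card S"
proof -
  have "dim ((*v) Q ` supported_in S) \<le> card S"
    using dim_image_le[OF matrix_vector_mul_linear, of Q "supported_in S"] by (simp add: dim_supported_in)
  then show ?thesis
    using dim_set_plus_le[of "range ((*v) P)" "(*v) Q ` supported_in S"] by (simp add: rank_dim_range)
qed

lemma Union_lowdim_neq_UNIV:
  fixes \<T> :: "'a::euclidean_space set set"
  assumes "finite \<T>" and "\<And>T. T \<in> \<T> \<Longrightarrow> dim T < DIM('a)"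
  shows "\<Union>\<T> \<noteq> UNIV"
proof
  assume "\<Union>\<T> = UNIV"
  moreover have "negligible (\<Union>\<T>)"
    using assms by (blast intro: negligible_lowdim)
  ultimately show False by simp
qed

lemma full_row_rankI:
  fixes M :: "'a::field^'k^'m"
  assumes "\<And>w. w v* M = 0 \<Longrightarrow> w = 0"
  shows "rank M = CARD('m)"
proof -
  let ?g = "(*v) (transpose M)"
  have lin: "Vector_Spaces.linear (*s) (*s) ?g"
    by (rule matrix_vector_mul_linear_gen)
  have inj: "inj_on ?g (vec.span cart_basis)"
    using vec.linear_inj_iff_eq_0[OF lin] assms by (simp add: inj_on_def)
  have "rows M = ?g ` cart_basis"
  proof -
    have "row i M = transpose M *v axis i 1" for i
      by (simp add: vec_eq_iff row_def transpose_def matrix_vector_mult_def axis_def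
          if_distrib cong: if_cong)
    then show ?thesis by (auto simp: rows_def cart_basis_def)
  qed
  then have "rank M = vec.dim (?g ` cart_basis)" by (simp add: row_rank_def_gen)
  also have "\<dots> = vec.dim (cart_basis :: ('a^'m) set)"
    by (rule vec.dim_image_eq[OF lin inj])
  also have "\<dots> = CARD('m)"
    using vec.dim_eq_card_independent[OF independent_cart_basis] by (simp add: card_cart_basis)
  finally show ?thesis .
qed

lemma sum_vector_matrix_mult_mult:
  fixes u :: "'a::comm_semiring_1^'m" and M :: "'a^'n^'m"
  shows "(\<Sum>j\<in>UNIV. (u v* M) $ j * x $ j) = (\<Sum>i\<in>UNIV. u $ i * (M *v x) $ i)"
proof -
  have "(\<Sum>j\<in>UNIV. (u v* M) $ j * x $ j) = (\<Sum>j\<in>UNIV. \<Sum>i\<in>UNIV. u $ i * M $ i $ j * x $ j)"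
    by (simp add: vector_matrix_mult_def sum_distrib_right)
  also have "\<dots> = (\<Sum>i\<in>UNIV. u $ i * (M *v x) $ i)"
    by (subst sum.swap) (simp add: matrix_vector_mult_def sum_distrib_left mult.assoc)
  finally show ?thesis .
qed

definition cvec :: "real^'n \<Rightarrow> complex^'n" where
  "cvec x = (\<chi> i. complex_of_real (x $ i))"

lemma cvec_0 [simp]: "cvec 0 = 0"
  by (simp add: cvec_def vec_eq_iff)

lemma cvec_add [simp]: "cvec (x + y) = cvec x + cvec y"
  by (simp add: cvec_def vec_eq_iff)

lemma cmat_mult_cvec [simp]: "cmat M *v cvec x = cvec (M *v x)"
  by (simp add: cmat_def cvec_def matrix_vector_mult_def vec_eq_iff)

lemma eq_0_if_annihilates_real_vectors:
  fixes w :: "complex^'m"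
  assumes "\<And>y. (\<Sum>k\<in>UNIV. w $ k * cvec y $ k) = 0"
  shows "w = 0"
proof -
  have "(\<Sum>k\<in>UNIV. (Re (w $ k))\<^sup>2) = 0"
    using arg_cong[OF assms[of "\<chi> k. Re (w $ k)"], of Re]
    by (simp add: cvec_def Re_sum power2_eq_square)
  moreover have "(\<Sum>k\<in>UNIV. (Im (w $ k))\<^sup>2) = 0"
    using arg_cong[OF assms[of "\<chi> k. Im (w $ k)"], of Im]
    by (simp add: cvec_def Im_sum power2_eq_square)
  ultimately show ?thesis
    by (simp add: sum_nonneg_eq_0_iff vec_eq_iff complex_eq_iff)
qed

lemma output_state_Suc:
  "A *v state D H x0 hs (Suc k) = (A ** D) *v state D H x0 hs k + (A ** H) *v hs (Suc k)"
  by (simp add: matrix_vector_right_distrib matrix_vector_mul_assoc)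

lemma sparse_controllable_outputs_covered:
  fixes D :: "real^'n^'n" and H :: "real^'l^'n" and A :: "real^'n^'m"
  assumes "output_sparse_controllable D H A s"
  shows "(\<Union>S\<in>{S. card S \<le> s}. range ((*v) (A ** D)) + (*v) (A ** H) ` supported_in S) = UNIV"
    (is "(\<Union>S\<in>_. ?T S) = _")
proof -
  have "y \<in> (\<Union>S\<in>{S. card S \<le> s}. ?T S)" for y
  proof -
    obtain K hs where sparse: "\<forall>k\<in>{1..K}. l0norm (hs k) \<le> s" and y: "A *v state D H 0 hs K = y"
      using assms unfolding output_sparse_controllable_def by blast
    show ?thesis
    proof (cases K)
      case 0
      have "(A ** D) *v 0 + (A ** H) *v 0 \<in> ?T {}"
        by (intro set_plus_intro rangeI imageI) (simp add: supported_in_def)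
      then have "y \<in> ?T {}" using y 0 by simp
      then show ?thesis by force
    next
      case (Suc k)
      let ?S = "{i. hs (Suc k) $ i \<noteq> 0}"
      have "y = (A ** D) *v state D H 0 hs k + (A ** H) *v hs (Suc k)"
        using y unfolding Suc output_state_Suc by (rule sym)
      moreover have "hs (Suc k) \<in> supported_in ?S" by (simp add: supported_in_def)
      ultimately have "y \<in> ?T ?S" by (auto intro: set_plus_intro)
      moreover have "card ?S \<le> s" using sparse Suc unfolding l0norm_def by auto
      ultimately show ?thesis by blast
    qed
  qed
  then show ?thesis by blast
qed

lemma sparse_controllable_rank_bound:
  fixes D :: "real^'n^'n" and H :: "real^'l^'n" and A :: "real^'n^'m"
  assumes "output_sparse_controllable D H A s"
  shows "CARD('m) \<le> rank (A ** D) + s"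
proof (rule ccontr)
  assume "\<not> CARD('m) \<le> rank (A ** D) + s"
  then have "dim (range ((*v) (A ** D)) + (*v) (A ** H) ` supported_in S) < DIM(real^'m)"
    if "card S \<le> s" for S :: "'l set"
    using dim_range_plus_supported_le[of "A ** D" "A ** H" S] that by simp
  then have "(\<Union>S\<in>{S. card S \<le> s}. range ((*v) (A ** D)) + (*v) (A ** H) ` supported_in S) \<noteq> UNIV"
    by (intro Union_lowdim_neq_UNIV) auto
  then show False using sparse_controllable_outputs_covered[OF assms] by simp
qed

lemma vector_matrix_mult_pbh_block_eq_0_iff:
  "u v* pbh_block z D H = 0 \<longleftrightarrow> u v* cmat D = z *s u \<and> u v* cmat H = 0"
proof -
  have "(u v* pbh_block z D H) $ Inl c = z * u $ c - (u v* cmat D) $ c" for c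
    by (simp add: vector_matrix_mult_def pbh_block_def mat_def right_diff_distrib sum_subtractf
        if_distrib[of "(*) _"] mult.commute cong: if_cong)
  moreover have "(u v* pbh_block z D H) $ Inr c = (u v* cmat H) $ c" for c
    by (simp add: vector_matrix_mult_def pbh_block_def)
  ultimately show ?thesis
    by (auto simp: vec_eq_iff split_sum_all)
qed

lemma left_eigenvector_annihilates_state:
  assumes "u v* cmat D = z *s u" and "u v* cmat H = 0"
  shows "(\<Sum>i\<in>UNIV. u $ i * cvec (state D H 0 hs K) $ i) = 0"
proof (induction K)
  case 0
  then show ?case by simp
next
  case (Suc K)
  have "(\<Sum>i\<in>UNIV. u $ i * cvec (D *v x) $ i) = z * (\<Sum>i\<in>UNIV. u $ i * cvec x $ i)" for x
    using sum_vector_matrix_mult_mult[of u "cmat D" "cvec x"]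
    by (simp add: assms(1) sum_distrib_left mult.assoc)
  moreover have "(\<Sum>i\<in>UNIV. u $ i * cvec (H *v h) $ i) = 0" for h
    using sum_vector_matrix_mult_mult[of u "cmat H" "cvec h"] by (simp add: assms(2))
  ultimately show ?case
    using Suc.IH by (simp add: distrib_left sum.distrib)
qed

lemma sparse_controllable_pbh_rank:
  fixes D :: "real^'n^'n" and H :: "real^'l^'n" and A :: "real^'n^'m"
  assumes "output_sparse_controllable D H A s"
  shows "rank (cmat A ** pbh_block z D H) = CARD('m)"
proof (rule full_row_rankI)
  fix w assume "w v* (cmat A ** pbh_block z D H) = 0"
  then have "(w v* cmat A) v* pbh_block z D H = 0"
    by (simp add: vector_matrix_mul_assoc)
  then have eig: "(w v* cmat A) v* cmat D = z *s (w v* cmat A)" "(w v* cmat A) v* cmat H = 0"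
    by (simp_all add: vector_matrix_mult_pbh_block_eq_0_iff)
  show "w = 0"
  proof (rule eq_0_if_annihilates_real_vectors)
    fix y
    obtain K hs where "A *v state D H 0 hs K = y"
      using assms unfolding output_sparse_controllable_def by blast
    then show "(\<Sum>k\<in>UNIV. w $ k * cvec y $ k) = 0"
      using sum_vector_matrix_mult_mult[of w "cmat A" "cvec (state D H 0 hs K)"]
        left_eigenvector_annihilates_state[OF eig]
      by simp
  qed
qed

theorem corollary1:
  fixes D :: "real^'n^'n" and H :: "real^'l^'n" and A :: "real^'n^'m" and s :: nat
  assumes "0 < s" and "s \<le> CARD('l)" and "CARD('m) < CARD('n)"
    and "output_sparse_controllable D H A s"
  shows "int s \<ge> int CARD('m) - int (rank (A ** D)) \<and>
         (\<forall>z::complex. rank (cmat A ** pbh_block z D H) = CARD('m))"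
  using sparse_controllable_rank_bound[OF assms(4)] sparse_controllable_pbh_rank[OF assms(4)]
  by auto

end
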